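(* Let $k\ge2$ and $c\in\mathcal{S}_k^\beta\setminus\{\mathbf{0}\}$. Then $w_H(c)=L_\beta(k)-q^{\nu(c)}L_\beta(k-1)$, where $L_\beta(m)=q^{(s-1)(m-1)}\frac{q^m-1}{q-1}$.
   Context: Let $R$ be a finite commutative chain ring with maximal ideal $\langle\gamma\rangle$, nilpotency index $s$ and residue field $R/\langle\gamma\rangle\cong\mathbb{F}_q$. Fix coset representatives $T=\{e_0,\dots,e_{q-1}\}$ with $e_0=0,e_1=1$, ordered $e_0<\dots<e_{q-1}$; each $r\in R$ is uniquely $\sum_{i=0}^{s-1}r_i\gamma^i$, $r_i\in T$; order $R$ by $x>y$ iff $x_i>y_i$ in $T$ for the largest $i$ with $x_i\neq y_i$; list $R=\{\rho_0,\dots,\rho_{q^s-1}\}$ increasingly. $\mathbf{a}^{(m)}$ is the constant vector of length $m$. Define $G_1^\alpha=(\rho_0\ \cdots\ \rho_{q^s-1})$ and, for $k>1$, $G_k^\alpha$ as the matrix of $q^s$ column blocks, the $j$-th having first row $\boldsymbol{\rho_j}^{(q^{s(k-1)})}$ and $G_{k-1}^\alpha$ below. List $\langle\gamma\rangle$ increasingly as $a_0\gamma<\dots<a_{q^{s-1}-1}\gamma$. Define $G_1^\beta=(1)$ and, for $k>1$, $G_k^\beta$ as the matrix with column blocks: first a block with first row $\mathbf{1}^{(q^{s(k-1)})}$ and $G_{k-1}^\alpha$ below; then for each $j=0,\dots,q^{s-1}-1$ a block with first row the constant vector with entry $a_j\gamma$ and $G_{k-1}^\beta$ below. $\mathcal{S}_k^\beta$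 is the $R$-submodule generated by the rows of $G_k^\beta$. $w_H$ is the Hamming weight. Valuation: for $x\in R\setminus\{0\}$, $\nu(x)$ is the largest $m$ with $x=\gamma^m\beta$, $\beta$ a unit; $\nu(0)=\infty$; for $x\in R^n$, $\nu(x)=\min_i\nu(x_i)$. *)

theory Defs
  imports "HOL-Library.Extended_Nat" Complex_Main
begin

text \<open>Setting: the finite commutative chain ring R is the whole (finite) type 'a.
  gam is the generator of the maximal ideal, s its nilpotency index,
  T the ordered list of coset representatives e_0 < e_1 < ... < e_(q-1), so q = length T.\<close>

definition chain_ring_data :: "'a::{comm_ring_1,finite} \<Rightarrow> nat \<Rightarrow> 'a list \<Rightarrow> bool" where
  "chain_ring_data gam s T \<longleftrightarrow>
     \<not> gam dvd 1 \<and> (\<forall>x::'a. \<not> x dvd 1 \<longrightarrow> gam dvd x) \<and>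
     1 \<le> s \<and> gam ^ s = 0 \<and> gam ^ (s - 1) \<noteq> 0 \<and>
     distinct T \<and> 2 \<le> length T \<and> T ! 0 = 0 \<and> T ! 1 = 1 \<and>
     (\<forall>x::'a. \<exists>!t. t \<in> set T \<and> gam dvd (x - t))"

definition cr_digit :: "'a::comm_ring_1 \<Rightarrow> nat \<Rightarrow> 'a list \<Rightarrow> 'a \<Rightarrow> nat \<Rightarrow> 'a" where
  "cr_digit gam s T x = (THE d. (\<forall>i<s. d i \<in> set T) \<and> (\<forall>i\<ge>s. d i = 0) \<and>
                                 x = (\<Sum>i<s. d i * gam ^ i))"

definition T_less :: "'a list \<Rightarrow> 'a \<Rightarrow> 'a \<Rightarrow> bool" where
  "T_less T x y \<longleftrightarrow> (\<exists>a b. a < b \<and> b < length T \<and> T ! a = x \<and> T ! b = y)"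

definition cr_less :: "'a::comm_ring_1 \<Rightarrow> nat \<Rightarrow> 'a list \<Rightarrow> 'a \<Rightarrow> 'a \<Rightarrow> bool" where
  "cr_less gam s T x y \<longleftrightarrow>
     (\<exists>i<s. cr_digit gam s T x i \<noteq> cr_digit gam s T y i \<and>
            (\<forall>j. i < j \<and> j < s \<longrightarrow> cr_digit gam s T x j = cr_digit gam s T y j) \<and>
            T_less T (cr_digit gam s T x i) (cr_digit gam s T y i))"

definition cr_enum :: "'a::comm_ring_1 \<Rightarrow> nat \<Rightarrow> 'a list \<Rightarrow> 'a set \<Rightarrow> 'a list" where
  "cr_enum gam s T A = (THE xs. distinct xs \<and> set xs = A \<and> sorted_wrt (cr_less gam s T) xs)"

definition rho_list :: "'a::comm_ring_1 \<Rightarrow> nat \<Rightarrow> 'a list \<Rightarrow> 'a list" where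
  "rho_list gam s T = cr_enum gam s T UNIV"

definition gam_list :: "'a::comm_ring_1 \<Rightarrow> nat \<Rightarrow> 'a list \<Rightarrow> 'a list" where
  "gam_list gam s T = cr_enum gam s T {x. gam dvd x}"

text \<open>Matrices are represented as lists of their columns (each column a list of
  length k, entry i = row i).\<close>
fun G_alpha :: "'a::comm_ring_1 \<Rightarrow> nat \<Rightarrow> 'a list \<Rightarrow> nat \<Rightarrow> 'a list list" where
  "G_alpha gam s T 0 = []"
| "G_alpha gam s T (Suc 0) = map (\<lambda>r. [r]) (rho_list gam s T)"
| "G_alpha gam s T (Suc (Suc k)) =
     concat (map (\<lambda>r. map (\<lambda>col. r # col) (G_alpha gam s T (Suc k))) (rho_list gam s T))"

fun G_beta :: "'a::comm_ring_1 \<Rightarrow> nat \<Rightarrow> 'a list \<Rightarrow> nat \<Rightarrow> 'a list list" where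
  "G_beta gam s T 0 = []"
| "G_beta gam s T (Suc 0) = [[1]]"
| "G_beta gam s T (Suc (Suc k)) =
     map (\<lambda>col. 1 # col) (G_alpha gam s T (Suc k)) @
     concat (map (\<lambda>a. map (\<lambda>col. a # col) (G_beta gam s T (Suc k))) (gam_list gam s T))"

definition row_span :: "'a::comm_ring_1 list list \<Rightarrow> nat \<Rightarrow> 'a list set" where
  "row_span cols k = {map (\<lambda>col. \<Sum>i<k. l i * col ! i) cols | l. True}"

definition S_beta :: "'a::comm_ring_1 \<Rightarrow> nat \<Rightarrow> 'a list \<Rightarrow> nat \<Rightarrow> 'a list set" where
  "S_beta gam s T k = row_span (G_beta gam s T k) k"

definition w_H :: "'a::zero list \<Rightarrow> nat" where
  "w_H c = length (filter (\<lambda>x. x \<noteq> 0) c)"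

definition nu :: "'a::comm_ring_1 \<Rightarrow> 'a \<Rightarrow> enat" where
  "nu gam x = (if x = 0 then \<infinity> else enat (GREATEST m. \<exists>b. b dvd 1 \<and> x = gam ^ m * b))"

definition nu_vec :: "'a::comm_ring_1 \<Rightarrow> 'a list \<Rightarrow> enat" where
  "nu_vec gam c = Min (nu gam ` set c)"

definition L_beta :: "nat \<Rightarrow> nat \<Rightarrow> nat \<Rightarrow> real" where
  "L_beta q s m = real q ^ ((s - 1) * (m - 1)) * (real q ^ m - 1) / (real q - 1)"

end

theory Submission
  imports Defs
begin

text \<open>
  A codeword is \<open>c = (l \<bullet> w)\<close>, where \<open>w\<close> runs over the columns of \<open>G_k^\<beta>\<close>; these are exactly
  the vectors of \<open>R^k\<close> whose first coordinate outside \<open>\<langle>\<gamma>\<rangle>\<close> equals 1. Every vector with a unit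
  coordinate is uniquely a unit multiple of such a column, so \<open>|R^\<times>| w_H(c)\<close> counts the vectors of
  \<open>R^k - \<langle>\<gamma>\<rangle>^k\<close> on which the linear form \<open>l\<close> does not vanish. If \<open>\<gamma>^t\<close> is the largest power
  of \<open>\<gamma>\<close> dividing every \<open>l_i\<close>, then \<open>\<nu>(c) = t\<close>, and \<open>l\<close> maps \<open>\<langle>\<gamma>^j\<rangle>^k\<close> onto \<open>\<langle>\<gamma>^(t+j)\<rangle>\<close>,
  which has \<open>q^(s-t-j)\<close> elements; hence \<open>l\<close> vanishes on \<open>q^((s-j)(k-1)+t)\<close> vectors of \<open>\<langle>\<gamma>^j\<rangle>^k\<close>.
  The cases \<open>j = 0, 1\<close> together with \<open>|R^\<times>| = q^(s-1) (q - 1)\<close> give the formula.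
\<close>

lemma dvd_unit_mult_iff:
  fixes u :: "'a::comm_ring_1"
  assumes "u dvd 1"
  shows "a dvd u * x \<longleftrightarrow> a dvd x"
proof
  obtain v where v: "1 = u * v"
    using assms by (rule dvdE)
  assume "a dvd u * x"
  then have "a dvd v * (u * x)"
    by (rule dvd_mult)
  also have "v * (u * x) = x"
    using v by (metis mult.assoc mult.commute mult_1_left)
  finally show "a dvd x" .
qed simp

lemma unit_mult_eq_0_iff:
  fixes u :: "'a::comm_ring_1"
  assumes "u dvd 1"
  shows "u * x = 0 \<longleftrightarrow> x = 0"
  using dvd_unit_mult_iff[OF assms, of 0 x] by simp

lemma concat_map_map_Cons: "concat (map (\<lambda>x. map ((#) x) ys) xs) = map (case_prod (#)) (List.product xs ys)"
  by (induction xs) auto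

lemma distinct_concat_map_map_Cons:
  "distinct xs \<Longrightarrow> distinct ys \<Longrightarrow> distinct (concat (map (\<lambda>x. map ((#) x) ys) xs))"
  unfolding concat_map_map_Cons by (simp add: distinct_map distinct_product inj_on_def)

lemma set_concat_map_map_Cons:
  "set (concat (map (\<lambda>x. map ((#) x) ys) xs)) = {x # y | x y. x \<in> set xs \<and> y \<in> set ys}"
  by auto

lemma w_H_map_distinct:
  assumes "distinct xs"
  shows "w_H (map f xs) = card {x \<in> set xs. f x \<noteq> 0}"
proof -
  have "w_H (map f xs) = length (filter (\<lambda>x. f x \<noteq> 0) xs)"
    by (simp add: w_H_def filter_map comp_def)
  also have "\<dots> = card {x \<in> set xs. f x \<noteq> 0}"
    using distinct_card[OF distinct_filter[OF assms]] by simp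
  finally show ?thesis .
qed

lemma card_eq_card_image_mult_card_fibre:
  assumes "finite A" and "\<And>x. x \<in> A \<Longrightarrow> card {y \<in> A. f y = f x} = n"
  shows "card A = card (f ` A) * n"
proof -
  have "card A = (\<Sum>z\<in>f ` A. card {y \<in> A. f y = z})"
    using card_eq_sum sum.image_gen[OF assms(1), of "\<lambda>_. 1::nat" f] by simp
  also have "\<dots> = (\<Sum>z\<in>f ` A. n)"
    using assms(2) by (intro sum.cong) auto
  finally show ?thesis
    by simp
qed

text \<open>\<open>dot k l v\<close> is the entry, in the column \<open>v\<close>, of the combination of rows with coefficients
  \<open>l\<close> (cf. \<open>row_span\<close>).\<close>
definition dot :: "nat \<Rightarrow> (nat \<Rightarrow> 'a::comm_ring_1) \<Rightarrow> 'a list \<Rightarrow> 'a" where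
  "dot k l v = (\<Sum>i<k. l i * v ! i)"

lemma dot_map2_plus: "length v = k \<Longrightarrow> length w = k \<Longrightarrow> dot k l (map2 (+) v w) = dot k l v + dot k l w"
  by (simp add: dot_def distrib_left sum.distrib)

lemma dot_map2_minus: "length v = k \<Longrightarrow> length w = k \<Longrightarrow> dot k l (map2 (-) v w) = dot k l v - dot k l w"
  by (simp add: dot_def right_diff_distrib sum_subtractf)

lemma dot_map_mult: "length v = k \<Longrightarrow> dot k l (map ((*) u) v) = u * dot k l v"
  by (simp add: dot_def sum_distrib_left mult.left_commute)

lemma dot_unit_vector:
  assumes "p < k"
  shows "dot k l (replicate p 0 @ x # replicate (k - Suc p) 0) = l p * x"
proof -
  have "dot k l (replicate p 0 @ x # replicate (k - Suc p) 0) = (\<Sum>i<k. if i = p then l p * x else 0)"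
    unfolding dot_def by (intro sum.cong) (auto simp: nth_append nth_Cons')
  with assms show ?thesis
    by simp
qed

text \<open>Translation by \<open>x\<close> maps the kernel of \<open>dot k l\<close> on \<open>D\<close> onto the fibre through \<open>x\<close>.\<close>
lemma card_eq_card_dot_image_mult_card_kernel:
  assumes "finite D" and len: "\<And>v. v \<in> D \<Longrightarrow> length v = k"
    and plus: "\<And>v w. v \<in> D \<Longrightarrow> w \<in> D \<Longrightarrow> map2 (+) v w \<in> D"
    and minus: "\<And>v w. v \<in> D \<Longrightarrow> w \<in> D \<Longrightarrow> map2 (-) v w \<in> D"
  shows "card D = card (dot k l ` D) * card {v \<in> D. dot k l v = 0}"
proof (rule card_eq_card_image_mult_card_fibre[OF assms(1)])
  fix x
  assume x: "x \<in> D"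
  have "bij_betw (\<lambda>v. map2 (-) v x) {v \<in> D. dot k l v = dot k l x} {v \<in> D. dot k l v = 0}"
  proof (rule bij_betw_byWitness[where f' = "\<lambda>v. map2 (+) v x"])
    show "\<forall>v\<in>{v \<in> D. dot k l v = dot k l x}. map2 (+) (map2 (-) v x) x = v"
      using len x by (auto intro!: nth_equalityI)
    show "\<forall>v\<in>{v \<in> D. dot k l v = 0}. map2 (-) (map2 (+) v x) x = v"
      using len x by (auto intro!: nth_equalityI)
    show "(\<lambda>v. map2 (-) v x) ` {v \<in> D. dot k l v = dot k l x} \<subseteq> {v \<in> D. dot k l v = 0}"
      using len x minus by (auto simp: dot_map2_minus)
    show "(\<lambda>v. map2 (+) v x) ` {v \<in> D. dot k l v = 0} \<subseteq> {v \<in> D. dot k l v = dot k l x}"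
      using len x plus by (auto simp: dot_map2_plus)
  qed
  then show "card {v \<in> D. dot k l v = dot k l x} = card {v \<in> D. dot k l v = 0}"
    by (rule bij_betw_same_card)
qed

section \<open>Finite chain rings\<close>

locale chain_ring =
  fixes gam :: "'a::{comm_ring_1,finite}" and s :: nat and T :: "'a list"
  assumes chain_ring_data: "chain_ring_data gam s T"
begin

lemma unit_iff_not_gam_dvd: "x dvd 1 \<longleftrightarrow> \<not> gam dvd x"
  using chain_ring_data dvd_trans unfolding chain_ring_data_def by blast

lemma s_pos: "1 \<le> s" and gam_pow_s: "gam ^ s = 0" and gam_pow_s_minus_1: "gam ^ (s - 1) \<noteq> 0"
  and distinct_T: "distinct T" and two_le_length_T: "2 \<le> length T"
  and ex1_T_representative: "\<exists>!t. t \<in> set T \<and> gam dvd (x - t)"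
  using chain_ring_data unfolding chain_ring_data_def by blast+

lemma T_eq_if_gam_dvd_diff: "t \<in> set T \<Longrightarrow> t' \<in> set T \<Longrightarrow> gam dvd (t - t') \<Longrightarrow> t = t'"
  using ex1_T_representative[of t] by force

lemma gam_pow_nonzero: "m < s \<Longrightarrow> gam ^ m \<noteq> 0"
proof
  assume "m < s" and "gam ^ m = 0"
  from \<open>m < s\<close> have "s - 1 = m + (s - 1 - m)"
    by simp
  then have "gam ^ (s - 1) = gam ^ m * gam ^ (s - 1 - m)"
    by (metis power_add)
  with \<open>gam ^ m = 0\<close> gam_pow_s_minus_1 show False
    by simp
qed

lemma gam_pow_eq_0: "s \<le> m \<Longrightarrow> gam ^ m = 0"
proof -
  assume "s \<le> m"
  then have "gam ^ m = gam ^ s * gam ^ (m - s)"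
    by (simp flip: power_add)
  then show ?thesis
    by (simp add: gam_pow_s)
qed

text \<open>The cancellation works because every non-unit lies in \<open>\<langle>\<gamma>\<rangle>\<close> and \<open>\<gamma>^m\<close> kills no unit.\<close>
lemma gam_dvd_if_gam_pow_Suc_dvd:
  assumes "m < s" and "gam ^ Suc m dvd gam ^ m * x"
  shows "gam dvd x"
proof -
  obtain w where "gam ^ m * x = gam ^ Suc m * w"
    using assms(2) by (rule dvdE)
  then have zero: "gam ^ m * (x - gam * w) = 0"
    by (simp add: algebra_simps)
  have "\<not> (x - gam * w) dvd 1"
  proof
    assume "(x - gam * w) dvd 1"
    then obtain v where "1 = (x - gam * w) * v"
      by (rule dvdE)
    then have "gam ^ m = gam ^ m * (x - gam * w) * v"
      by (simp add: mult.assoc)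
    with zero gam_pow_nonzero[OF assms(1)] show False
      by simp
  qed
  then have "gam dvd (x - gam * w)"
    by (simp add: unit_iff_not_gam_dvd)
  then have "gam dvd (x - gam * w) + gam * w"
    by (rule dvd_add) simp
  then show ?thesis
    by simp
qed

lemma gam_pow_dvd_gam_pow_mult_unit_iff:
  assumes "m < s" and "u dvd 1"
  shows "gam ^ n dvd gam ^ m * u \<longleftrightarrow> n \<le> m"
proof
  assume dvd: "gam ^ n dvd gam ^ m * u"
  show "n \<le> m"
  proof (rule ccontr)
    assume "\<not> n \<le> m"
    then have "gam ^ Suc m dvd gam ^ m * u"
      using dvd by (meson dvd_trans le_imp_power_dvd not_less_eq_eq)
    then show False
      using gam_dvd_if_gam_pow_Suc_dvd assms unit_iff_not_gam_dvd by blast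
  qed
qed (simp add: le_imp_power_dvd)

lemma card_gam_pow_multiples_step:
  assumes "t < s"
  shows "card {y. gam ^ t dvd y} = length T * card {y. gam ^ Suc t dvd y}"
proof -
  let ?f = "\<lambda>(e, y). gam ^ t * e + y"
  have "e = e' \<and> y = y'"
    if "e \<in> set T" "e' \<in> set T" "gam ^ Suc t dvd y" "gam ^ Suc t dvd y'"
      and eq: "gam ^ t * e + y = gam ^ t * e' + y'" for e y e' y'
  proof -
    have "gam ^ t * (e - e') = y' - y"
      using eq by (simp add: algebra_simps)
    moreover have "gam ^ Suc t dvd y' - y"
      using that by (simp add: dvd_diff)
    ultimately have "gam dvd e - e'"
      using gam_dvd_if_gam_pow_Suc_dvd[OF assms] by simp
    then have "e = e'"
      using T_eq_if_gam_dvd_diff that by blast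
    with eq show ?thesis
      by simp
  qed
  then have "inj_on ?f (set T \<times> {y. gam ^ Suc t dvd y})"
    by (intro inj_onI) auto
  moreover have "?f ` (set T \<times> {y. gam ^ Suc t dvd y}) = {y. gam ^ t dvd y}"
  proof (intro equalityI subsetI)
    fix z
    assume "z \<in> ?f ` (set T \<times> {y. gam ^ Suc t dvd y})"
    then obtain e y where "z = gam ^ t * e + y" and "gam ^ Suc t dvd y"
      by auto
    moreover from \<open>gam ^ Suc t dvd y\<close> have "gam ^ t dvd y"
      by (rule dvd_trans[rotated]) (simp add: le_imp_power_dvd)
    ultimately show "z \<in> {y. gam ^ t dvd y}"
      by simp
  next
    fix z
    assume "z \<in> {y. gam ^ t dvd y}"
    then obtain x where x: "z = gam ^ t * x"
      by blast
    obtain e where e: "e \<in> set T" "gam dvd (x - e)"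
      using ex1_T_representative[of x] by blast
    obtain w where "x - e = gam * w"
      using e(2) by (rule dvdE)
    then have "z = ?f (e, gam ^ Suc t * w)"
      using x by (simp add: algebra_simps)
    moreover have "(e, gam ^ Suc t * w) \<in> set T \<times> {y. gam ^ Suc t dvd y}"
      using e(1) by simp
    ultimately show "z \<in> ?f ` (set T \<times> {y. gam ^ Suc t dvd y})"
      by (rule image_eqI)
  qed
  ultimately have "card {y. gam ^ t dvd y} = card (set T \<times> {y. gam ^ Suc t dvd y})"
    by (metis card_image)
  also have "\<dots> = length T * card {y. gam ^ Suc t dvd y}"
    by (simp add: card_cartesian_product distinct_card[OF distinct_T])
  finally show ?thesis .
qed

lemma card_gam_pow_multiples: "t \<le> s \<Longrightarrow> card {y. gam ^ t dvd y} = length T ^ (s - t)"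
proof (induction t rule: inc_induct)
  case base
  then show ?case
    by (simp add: gam_pow_s)
next
  case (step t)
  then have "s - t = Suc (s - Suc t)"
    by simp
  with step show ?case
    by (simp add: card_gam_pow_multiples_step)
qed

lemma card_units: "card {u::'a. u dvd 1} = length T ^ s - length T ^ (s - 1)"
proof -
  have "{u::'a. u dvd 1} = UNIV - {x. gam ^ 1 dvd x}"
    by (auto simp: unit_iff_not_gam_dvd)
  then show ?thesis
    using card_gam_pow_multiples[of 0] card_gam_pow_multiples[of 1] s_pos
    by (simp add: card_Diff_subset)
qed

lemma min_valuation_exists:
  assumes "x0 \<in> X" and "x0 \<noteq> 0"
  obtains t where "t < s" and "\<forall>x\<in>X. gam ^ t dvd x" and "\<exists>x\<in>X. \<exists>u. u dvd 1 \<and> x = gam ^ t * u"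
proof -
  let ?P = "\<lambda>m. \<forall>x\<in>X. gam ^ m dvd x"
  have bound: "m < s" if "?P m" for m
  proof (rule ccontr)
    assume "\<not> m < s"
    then have "gam ^ m = 0"
      by (simp add: gam_pow_eq_0)
    with that assms show False
      by auto
  qed
  have "\<forall>m. ?P m \<longrightarrow> m \<le> s"
    using bound by (simp add: less_imp_le)
  then obtain t where t: "?P t" and greatest: "\<forall>m. ?P m \<longrightarrow> m \<le> t"
    using Nat.ex_has_greatest_nat[where P = ?P and k = 0 and b = s] by auto
  then have "\<not> ?P (Suc t)"
    by (meson Suc_n_not_le_n)
  then obtain x where x: "x \<in> X" "\<not> gam ^ Suc t dvd x"
    by blast
  with t obtain u where u: "x = gam ^ t * u"
    by (meson dvdE)
  have "u dvd 1"
  proof (rule ccontr)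
    assume "\<not> u dvd 1"
    then have "gam ^ Suc t dvd gam ^ t * u"
      by (simp add: unit_iff_not_gam_dvd mult_dvd_mono mult.commute)
    with x u show False
      by simp
  qed
  with x u have "\<exists>x\<in>X. \<exists>u. u dvd 1 \<and> x = gam ^ t * u"
    by blast
  with bound t that show ?thesis
    by blast
qed

lemma nu_gam_pow_mult_unit:
  assumes "m < s" and "u dvd 1"
  shows "nu gam (gam ^ m * u) = enat m"
proof -
  have "gam ^ m * u \<noteq> 0"
    using gam_pow_dvd_gam_pow_mult_unit_iff[OF assms, of "Suc m"] by auto
  moreover have "(GREATEST m'. \<exists>b. b dvd 1 \<and> gam ^ m * u = gam ^ m' * b) = m"
  proof (rule Greatest_equality)
    fix m'
    assume "\<exists>b. b dvd 1 \<and> gam ^ m * u = gam ^ m' * b"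
    then have "gam ^ m' dvd gam ^ m * u"
      by auto
    then show "m' \<le> m"
      using gam_pow_dvd_gam_pow_mult_unit_iff[OF assms] by simp
  qed (use assms in blast)
  ultimately show ?thesis
    by (simp add: nu_def)
qed

lemma enat_le_nu_if_gam_pow_dvd:
  assumes "gam ^ t dvd y"
  shows "enat t \<le> nu gam y"
proof (cases "y = 0")
  case False
  then obtain m u where "m < s" "u dvd 1" "y = gam ^ m * u"
    using min_valuation_exists[of y "{y}"] by (metis singletonD singletonI)
  with assms show ?thesis
    using gam_pow_dvd_gam_pow_mult_unit_iff nu_gam_pow_mult_unit by simp
qed (simp add: nu_def)

lemma nu_vec_eqI:
  assumes "\<forall>y\<in>set c. gam ^ t dvd y" and "x \<in> set c" and "nu gam x = enat t"
  shows "nu_vec gam c = enat t"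
  unfolding nu_vec_def
  using assms enat_le_nu_if_gam_pow_dvd by (intro Min_eqI) (auto intro: rev_image_eqI)

section \<open>Digit expansions and the order on \<open>R\<close>\<close>

lemma gam_adic_expansion_exists:
  "\<exists>d. (\<forall>i<n. d i \<in> set T) \<and> (\<forall>i\<ge>n. d i = 0) \<and> (\<exists>y. x = (\<Sum>i<n. d i * gam ^ i) + gam ^ n * y)"
proof (induction n)
  case 0
  show ?case
    by (rule exI[of _ "\<lambda>_. 0"]) simp
next
  case (Suc n)
  then obtain d y where d: "\<forall>i<n. d i \<in> set T" "\<forall>i\<ge>n. d i = 0"
    and x: "x = (\<Sum>i<n. d i * gam ^ i) + gam ^ n * y"
    by blast
  obtain e where e: "e \<in> set T" "gam dvd y - e"
    using ex1_T_representative[of y] by blast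
  obtain y' where y': "y - e = gam * y'"
    using e(2) by (rule dvdE)
  have "(\<Sum>i<Suc n. (d(n := e)) i * gam ^ i) = (\<Sum>i<n. d i * gam ^ i) + e * gam ^ n"
    by simp
  then have "x = (\<Sum>i<Suc n. (d(n := e)) i * gam ^ i) + gam ^ Suc n * y'"
    using x y' by (simp add: algebra_simps)
  moreover have "\<forall>i<Suc n. (d(n := e)) i \<in> set T" and "\<forall>i\<ge>Suc n. (d(n := e)) i = 0"
    using d e(1) by (simp_all add: less_Suc_eq)
  ultimately show ?case
    by blast
qed

lemma gam_adic_digits_unique:
  assumes "n \<le> s" and "\<forall>i<n. d i \<in> set T" and "\<forall>i<n. e i \<in> set T"
    and "gam ^ n dvd (\<Sum>i<n. d i * gam ^ i) - (\<Sum>i<n. e i * gam ^ i)"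
  shows "\<forall>i<n. d i = e i"
  using assms
proof (induction n)
  case (Suc n)
  let ?D = "\<lambda>n. (\<Sum>i<n. d i * gam ^ i) - (\<Sum>i<n. e i * gam ^ i)"
  have D_Suc: "?D (Suc n) = ?D n + gam ^ n * (d n - e n)"
    by (simp add: algebra_simps)
  have "gam ^ n dvd ?D (Suc n)"
    using Suc.prems(4) by (rule dvd_trans[rotated]) (simp add: le_imp_power_dvd)
  then have "gam ^ n dvd ?D n"
    unfolding D_Suc by (simp add: dvd_add_left_iff)
  with Suc have below: "\<forall>i<n. d i = e i"
    by simp
  then have "?D n = 0"
    by simp
  with Suc.prems(4) have "gam ^ Suc n dvd gam ^ n * (d n - e n)"
    unfolding D_Suc by simp
  then have "gam dvd d n - e n"
    using Suc.prems(1) by (intro gam_dvd_if_gam_pow_Suc_dvd) simp_all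
  then have "d n = e n"
    using Suc.prems(2,3) T_eq_if_gam_dvd_diff by simp
  with below show ?case
    by (simp add: less_Suc_eq)
qed simp

lemma ex1_gam_adic_digits:
  "\<exists>!d. (\<forall>i<s. d i \<in> set T) \<and> (\<forall>i\<ge>s. d i = 0) \<and> x = (\<Sum>i<s. d i * gam ^ i)"
proof -
  obtain d y where d: "\<forall>i<s. d i \<in> set T" "\<forall>i\<ge>s. d i = 0"
    and "x = (\<Sum>i<s. d i * gam ^ i) + gam ^ s * y"
    using gam_adic_expansion_exists by blast
  then have x: "x = (\<Sum>i<s. d i * gam ^ i)"
    by (simp add: gam_pow_s)
  have "e = d" if "\<forall>i<s. e i \<in> set T" "\<forall>i\<ge>s. e i = 0" "x = (\<Sum>i<s. e i * gam ^ i)" for e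
  proof -
    have "\<forall>i<s. e i = d i"
      using that d x by (intro gam_adic_digits_unique) simp_all
    with that(2) d(2) show "e = d"
      by (metis not_less ext)
  qed
  with d x show ?thesis
    by blast
qed

lemma cr_digit_expansion:
  "(\<forall>i<s. cr_digit gam s T x i \<in> set T) \<and> (\<forall>i\<ge>s. cr_digit gam s T x i = 0) \<and>
   x = (\<Sum>i<s. cr_digit gam s T x i * gam ^ i)"
  unfolding cr_digit_def by (rule theI'[OF ex1_gam_adic_digits])

lemma cr_digit_in_T: "i < s \<Longrightarrow> cr_digit gam s T x i \<in> set T"
  using cr_digit_expansion by blast

lemma cr_digit_inject:
  assumes "\<forall>i<s. cr_digit gam s T x i = cr_digit gam s T y i"
  shows "x = y"
  using cr_digit_expansion[of x] cr_digit_expansion[of y] assms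
  by (metis (no_types, lifting) lessThan_iff sum.cong)

lemma T_less_asym: "T_less T x y \<Longrightarrow> \<not> T_less T y x"
  unfolding T_less_def using nth_eq_iff_index_eq[OF distinct_T]
  by (metis order.strict_trans not_less_iff_gr_or_eq)

lemma T_less_trans: "T_less T x y \<Longrightarrow> T_less T y z \<Longrightarrow> T_less T x z"
  unfolding T_less_def using nth_eq_iff_index_eq[OF distinct_T]
  by (metis order.strict_trans)

lemma T_less_linear: "x \<in> set T \<Longrightarrow> y \<in> set T \<Longrightarrow> x \<noteq> y \<Longrightarrow> T_less T x y \<or> T_less T y x"
  unfolding T_less_def in_set_conv_nth by (metis linorder_neqE_nat)

abbreviation digit :: "'a \<Rightarrow> nat \<Rightarrow> 'a" where
  "digit \<equiv> cr_digit gam s T"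

lemma cr_lessE:
  assumes "cr_less gam s T x y"
  obtains i where "i < s" and "digit x i \<noteq> digit y i" and "\<forall>j. i < j \<and> j < s \<longrightarrow> digit x j = digit y j"
    and "T_less T (digit x i) (digit y i)"
  using assms unfolding cr_less_def by blast

lemma cr_less_asym:
  assumes "cr_less gam s T x y"
  shows "\<not> cr_less gam s T y x"
proof
  assume "cr_less gam s T y x"
  then obtain j where j: "j < s" "digit y j \<noteq> digit x j" "\<forall>k. j < k \<and> k < s \<longrightarrow> digit y k = digit x k"
    "T_less T (digit y j) (digit x j)"
    by (rule cr_lessE)
  obtain i where i: "i < s" "digit x i \<noteq> digit y i" "\<forall>k. i < k \<and> k < s \<longrightarrow> digit x k = digit y k"
    "T_less T (digit x i) (digit y i)"
    using assms by (rule cr_lessE)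
  have "i = j"
    using i j by (metis linorder_neqE_nat)
  with i(4) j(4) show False
    using T_less_asym by blast
qed

lemma cr_less_trans:
  assumes "cr_less gam s T x y" and "cr_less gam s T y z"
  shows "cr_less gam s T x z"
proof -
  obtain i where i: "i < s" "digit x i \<noteq> digit y i" "\<forall>j. i < j \<and> j < s \<longrightarrow> digit x j = digit y j"
    "T_less T (digit x i) (digit y i)"
    using assms(1) by (rule cr_lessE)
  obtain j where j: "j < s" "digit y j \<noteq> digit z j" "\<forall>k. j < k \<and> k < s \<longrightarrow> digit y k = digit z k"
    "T_less T (digit y j) (digit z j)"
    using assms(2) by (rule cr_lessE)
  let ?m = "max i j"
  have above: "\<forall>k. ?m < k \<and> k < s \<longrightarrow> digit x k = digit z k"
    using i(3) j(3) by simp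
  have "T_less T (digit x ?m) (digit z ?m)"
  proof (cases i j rule: linorder_cases)
    case less
    then show ?thesis
      using i(3) j(1,4) by simp
  next
    case equal
    then show ?thesis
      using i(4) j(4) T_less_trans by simp
  next
    case greater
    then show ?thesis
      using j(3) i(1,4) by simp
  qed
  moreover have "digit x ?m \<noteq> digit z ?m"
    using calculation T_less_asym by metis
  moreover have "?m < s"
    using i(1) j(1) by simp
  ultimately show ?thesis
    unfolding cr_less_def using above by blast
qed

lemma cr_less_linear:
  assumes "x \<noteq> y"
  shows "cr_less gam s T x y \<or> cr_less gam s T y x"
proof -
  let ?P = "\<lambda>i. i < s \<and> digit x i \<noteq> digit y i"
  have "\<exists>i. ?P i"
    using cr_digit_inject assms by blast
  then obtain i where i: "?P i" and above: "\<forall>j. ?P j \<longrightarrow> j \<le> i"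
    using Nat.ex_has_greatest_nat[where P = ?P and b = s] by (metis less_imp_le)
  then have "\<forall>j. i < j \<and> j < s \<longrightarrow> digit x j = digit y j"
    by (meson leD)
  moreover have "T_less T (digit x i) (digit y i) \<or> T_less T (digit y i) (digit x i)"
    using i cr_digit_in_T T_less_linear by simp
  ultimately show ?thesis
    unfolding cr_less_def using i by (metis (no_types, lifting))
qed

text \<open>All that matters about \<open>cr_less\<close> is that it is a strict linear order: this makes
  \<open>rho_list\<close> and \<open>gam_list\<close> duplicate-free enumerations of \<open>R\<close> and \<open>\<langle>\<gamma>\<rangle>\<close>.\<close>
sublocale cr_order: linorder "\<lambda>x y. x = y \<or> cr_less gam s T x y" "cr_less gam s T"
  by unfold_locales (use cr_less_asym cr_less_trans cr_less_linear in blast)+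

lemma
  shows distinct_cr_enum [simp]: "distinct (cr_enum gam s T A)"
    and set_cr_enum [simp]: "set (cr_enum gam s T A) = A"
proof -
  have "\<exists>!xs. sorted_wrt (cr_less gam s T) xs \<and> set xs = A"
    by (rule cr_order.ex1_sorted_list_for_set_if_finite) simp
  then have "\<exists>!xs. distinct xs \<and> set xs = A \<and> sorted_wrt (cr_less gam s T) xs"
    using cr_order.strict_sorted_iff by metis
  from theI'[OF this] show "distinct (cr_enum gam s T A)" "set (cr_enum gam s T A) = A"
    unfolding cr_enum_def by simp_all
qed

section \<open>Columns of the generator matrices\<close>

lemma G_alpha_columns:
  "distinct (G_alpha gam s T (Suc n)) \<and> set (G_alpha gam s T (Suc n)) = {v. length v = Suc n}"
proof (induction n)
  case 0
  then show ?case
    by (auto simp: rho_list_def distinct_map inj_on_def length_Suc_conv)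
next
  case (Suc n)
  then show ?case
    by (auto simp: rho_list_def distinct_concat_map_map_Cons set_concat_map_map_Cons length_Suc_conv)
qed

text \<open>The columns of \<open>G_beta\<close>: the vectors whose first coordinate outside \<open>\<langle>\<gamma>\<rangle>\<close> is \<open>1\<close>.
  They are normalised representatives of the vectors with a unit coordinate modulo units.\<close>
definition monic_vecs :: "nat \<Rightarrow> 'a list set" where
  "monic_vecs k = {v. length v = k \<and> (\<exists>w. dropWhile (\<lambda>x. gam dvd x) v = 1 # w)}"

lemma monic_vecs_0: "monic_vecs 0 = {}"
  by (simp add: monic_vecs_def)

lemma Cons_in_monic_vecs_iff:
  "x # v \<in> monic_vecs (Suc k) \<longleftrightarrow> (x = 1 \<and> length v = k) \<or> (gam dvd x \<and> v \<in> monic_vecs k)"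
  using unit_iff_not_gam_dvd[of 1] by (auto simp: monic_vecs_def)

lemma monic_vecs_Suc:
  "monic_vecs (Suc k) = {1 # v | v. length v = k} \<union> {a # w | a w. gam dvd a \<and> w \<in> monic_vecs k}"
proof (intro set_eqI iffI)
  fix v
  assume "v \<in> monic_vecs (Suc k)"
  moreover obtain x w where "v = x # w"
    using calculation by (auto simp: monic_vecs_def length_Suc_conv)
  ultimately show "v \<in> {1 # v | v. length v = k} \<union> {a # w | a w. gam dvd a \<and> w \<in> monic_vecs k}"
    by (auto simp: Cons_in_monic_vecs_iff)
qed (auto simp: Cons_in_monic_vecs_iff)

lemma unit_vector_in_monic_vecs: "p < k \<Longrightarrow> replicate p 0 @ 1 # replicate (k - Suc p) 0 \<in> monic_vecs k"
  using unit_iff_not_gam_dvd[of 1] by (simp add: monic_vecs_def dropWhile_append3)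

lemma G_beta_columns:
  "distinct (G_beta gam s T (Suc n)) \<and> set (G_beta gam s T (Suc n)) = monic_vecs (Suc n)"
proof (induction n)
  case 0
  then show ?case
    by (simp add: monic_vecs_Suc monic_vecs_0)
next
  case (Suc n)
  then show ?case
    using G_alpha_columns[of n] unit_iff_not_gam_dvd[of 1]
    by (auto simp: monic_vecs_Suc[of "Suc n"] gam_list_def distinct_map distinct_concat_map_map_Cons
        set_concat_map_map_Cons)
qed

section \<open>Zeros of a linear form\<close>

definition gam_pow_vecs :: "nat \<Rightarrow> nat \<Rightarrow> 'a list set" where
  "gam_pow_vecs j k = {v. set v \<subseteq> {x. gam ^ j dvd x} \<and> length v = k}"

lemma finite_gam_pow_vecs: "finite (gam_pow_vecs j k)"
  unfolding gam_pow_vecs_def by (rule finite_lists_length_eq) simp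

lemma card_gam_pow_vecs: "j \<le> s \<Longrightarrow> card (gam_pow_vecs j k) = length T ^ ((s - j) * k)"
  by (simp add: gam_pow_vecs_def card_lists_length_eq card_gam_pow_multiples power_mult)

lemma dot_image_gam_pow_vecs:
  assumes l: "\<forall>i<k. gam ^ t dvd l i" and p: "p < k" "l p = gam ^ t * u" and u: "u dvd 1"
  shows "dot k l ` gam_pow_vecs j k = {y. gam ^ (t + j) dvd y}"
proof (intro equalityI subsetI)
  fix y
  assume "y \<in> dot k l ` gam_pow_vecs j k"
  then obtain v where v: "set v \<subseteq> {x. gam ^ j dvd x}" "length v = k" and y: "y = dot k l v"
    by (auto simp: gam_pow_vecs_def)
  have "gam ^ t * gam ^ j dvd l i * v ! i" if "i < k" for i
    using l v that by (intro mult_dvd_mono) (auto simp: subset_iff)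
  then show "y \<in> {y. gam ^ (t + j) dvd y}"
    unfolding y dot_def power_add by (auto intro: dvd_sum)
next
  fix y
  assume "y \<in> {y. gam ^ (t + j) dvd y}"
  then obtain z where z: "y = gam ^ (t + j) * z"
    by blast
  obtain u' where u': "1 = u * u'"
    using u by (rule dvdE)
  let ?v = "replicate p 0 @ gam ^ j * z * u' # replicate (k - Suc p) 0"
  have "dot k l ?v = gam ^ (t + j) * z * (u * u')"
    using p by (simp add: dot_unit_vector power_add ac_simps)
  then have "y = dot k l ?v"
    using z u' by simp
  moreover have "?v \<in> gam_pow_vecs j k"
    using p by (auto simp: gam_pow_vecs_def)
  ultimately show "y \<in> dot k l ` gam_pow_vecs j k"
    by (rule image_eqI)
qed

lemma card_dot_nonzero_gam_pow_vecs:
  assumes l: "\<forall>i<k. gam ^ t dvd l i" and p: "p < k" "l p = gam ^ t * u" and u: "u dvd 1"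
    and "t + j \<le> s"
  shows "real (card {v \<in> gam_pow_vecs j k. dot k l v \<noteq> 0})
    = real (length T) ^ ((s - j) * k) - real (length T) ^ ((s - j) * (k - 1) + t)"
proof -
  let ?D = "gam_pow_vecs j k" and ?q = "length T"
  have "finite ?D"
    by (rule finite_gam_pow_vecs)
  have "card ?D = card (dot k l ` ?D) * card {v \<in> ?D. dot k l v = 0}"
    by (rule card_eq_card_dot_image_mult_card_kernel[OF \<open>finite ?D\<close>])
      (auto simp: gam_pow_vecs_def set_zip subset_iff dvd_add dvd_diff)
  then have "?q ^ ((s - j) * k) = ?q ^ (s - (t + j)) * card {v \<in> ?D. dot k l v = 0}"
    using assms by (simp add: dot_image_gam_pow_vecs card_gam_pow_vecs card_gam_pow_multiples)
  moreover have "(s - j) * k = (s - (t + j)) + ((s - j) * (k - 1) + t)"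
  proof -
    obtain n where "k = Suc n"
      using p(1) by (cases k) auto
    with \<open>t + j \<le> s\<close> show ?thesis
      by (simp only: mult_Suc_right diff_Suc_1)
  qed
  ultimately have kernel: "card {v \<in> ?D. dot k l v = 0} = ?q ^ ((s - j) * (k - 1) + t)"
    using two_le_length_T by (auto simp: power_add)
  have "card ?D = card ({v \<in> ?D. dot k l v \<noteq> 0} \<union> {v \<in> ?D. dot k l v = 0})"
    by (rule arg_cong[where f = card]) auto
  also have "\<dots> = card {v \<in> ?D. dot k l v \<noteq> 0} + card {v \<in> ?D. dot k l v = 0}"
    using \<open>finite ?D\<close> by (intro card_Un_disjoint) auto
  finally show ?thesis
    using kernel \<open>t + j \<le> s\<close> by (simp add: card_gam_pow_vecs flip: of_nat_power)
qed

lemma dropWhile_gam_dvd_map_unit_mult: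
  "u dvd 1 \<Longrightarrow> dropWhile (\<lambda>x. gam dvd x) (map ((*) u) v) = map ((*) u) (dropWhile (\<lambda>x. gam dvd x) v)"
  by (simp add: dropWhile_map comp_def dvd_unit_mult_iff)

lemma bij_betw_unit_scaling_monic_vecs:
  assumes P: "\<And>u v. u dvd 1 \<Longrightarrow> length v = k \<Longrightarrow> P (map ((*) u) v) \<longleftrightarrow> P v"
  shows "bij_betw (\<lambda>(u, w). map ((*) u) w) ({u. u dvd 1} \<times> {w \<in> monic_vecs k. P w})
           {v. length v = k \<and> (\<exists>x\<in>set v. \<not> gam dvd x) \<and> P v}"
proof (rule bij_betw_imageI)
  have "u = u' \<and> w = w'"
    if units: "u dvd 1" "u' dvd 1" and monic: "w \<in> monic_vecs k" "w' \<in> monic_vecs k"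
      and eq: "map ((*) u) w = map ((*) u') w'" for u u' w w'
  proof -
    obtain r r' where "dropWhile (\<lambda>x. gam dvd x) w = 1 # r" "dropWhile (\<lambda>x. gam dvd x) w' = 1 # r'"
      using monic by (auto simp: monic_vecs_def)
    then have "u = u'"
      using arg_cong[OF eq, of "dropWhile (\<lambda>x. gam dvd x)"] units
      by (simp add: dropWhile_gam_dvd_map_unit_mult)
    moreover obtain v where "1 = v * u"
      using units(1) by (metis dvdE mult.commute)
    then have "w = w'"
      using arg_cong[OF eq, of "map ((*) v)"] \<open>u = u'\<close> by (simp add: comp_def mult.assoc[symmetric])
    ultimately show ?thesis ..
  qed
  then show "inj_on (\<lambda>(u, w). map ((*) u) w) ({u. u dvd 1} \<times> {w \<in> monic_vecs k. P w})"
    by (auto intro!: inj_onI)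
next
  show "(\<lambda>(u, w). map ((*) u) w) ` ({u. u dvd 1} \<times> {w \<in> monic_vecs k. P w})
      = {v. length v = k \<and> (\<exists>x\<in>set v. \<not> gam dvd x) \<and> P v}"
  proof (intro equalityI subsetI)
    fix v
    assume "v \<in> (\<lambda>(u, w). map ((*) u) w) ` ({u. u dvd 1} \<times> {w \<in> monic_vecs k. P w})"
    then obtain u w r where v: "v = map ((*) u) w" and "u dvd 1" "length w = k" "P w"
      and "dropWhile (\<lambda>x. gam dvd x) w = 1 # r"
      by (auto simp: monic_vecs_def)
    then have "1 \<in> set w"
      by (metis list.set_intros(1) set_dropWhileD)
    then have "u \<in> set v"
      unfolding v by (metis image_eqI list.set_map mult_1_right)
    moreover have "\<not> gam dvd u"
      using \<open>u dvd 1\<close> unit_iff_not_gam_dvd by blast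
    moreover have "length v = k" and "P v"
      using v P \<open>u dvd 1\<close> \<open>length w = k\<close> \<open>P w\<close> by simp_all
    ultimately show "v \<in> {v. length v = k \<and> (\<exists>x\<in>set v. \<not> gam dvd x) \<and> P v}"
      by blast
  next
    fix v
    assume "v \<in> {v. length v = k \<and> (\<exists>x\<in>set v. \<not> gam dvd x) \<and> P v}"
    then have v: "length v = k" "\<exists>x\<in>set v. \<not> gam dvd x" "P v"
      by auto
    then obtain a r where a: "dropWhile (\<lambda>x. gam dvd x) v = a # r"
      by (metis dropWhile_eq_Nil_conv neq_Nil_conv)
    then have "a dvd 1"
      using hd_dropWhile[of "\<lambda>x. gam dvd x" v] by (simp add: unit_iff_not_gam_dvd)
    then obtain a' where a': "1 = a * a'"
      by (rule dvdE)
    then have "a' dvd 1"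
      by (metis dvdI mult.commute)
    let ?w = "map ((*) a') v"
    have "?w \<in> monic_vecs k" 
      using a a' \<open>a' dvd 1\<close> v(1) by (simp add: monic_vecs_def dropWhile_gam_dvd_map_unit_mult mult.commute)
    moreover have "P ?w"
      using P \<open>a' dvd 1\<close> v by simp
    moreover have "v = map ((*) a) ?w"
      using a' by (simp add: comp_def mult.assoc[symmetric])
    ultimately show "v \<in> (\<lambda>(u, w). map ((*) u) w) ` ({u. u dvd 1} \<times> {w \<in> monic_vecs k. P w})"
      using \<open>a dvd 1\<close> by (intro image_eqI[where x = "(a, ?w)"]) auto
  qed
qed

text \<open>Scaling by units identifies \<open>R^\<times> \<times> monic_vecs k\<close> with \<open>R^k - \<langle>\<gamma>\<rangle>^k\<close>.\<close>
lemma card_monic_vecs_dot_nonzero: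
  assumes l: "\<forall>i<k. gam ^ t dvd l i" and p: "p < k" "l p = gam ^ t * u" and u: "u dvd 1"
    and "t < s"
  shows "real (card {w \<in> monic_vecs k. dot k l w \<noteq> 0}) * (real (length T) ^ s - real (length T) ^ (s - 1))
    = (real (length T) ^ (s * k) - real (length T) ^ (s * (k - 1) + t))
      - (real (length T) ^ ((s - 1) * k) - real (length T) ^ ((s - 1) * (k - 1) + t))"
proof -
  let ?N = "\<lambda>j. {v \<in> gam_pow_vecs j k. dot k l v \<noteq> 0}"
  have "bij_betw (\<lambda>(u, w). map ((*) u) w) ({u. u dvd 1} \<times> {w \<in> monic_vecs k. dot k l w \<noteq> 0})
      {v. length v = k \<and> (\<exists>x\<in>set v. \<not> gam dvd x) \<and> dot k l v \<noteq> 0}"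
    by (rule bij_betw_unit_scaling_monic_vecs) (simp add: dot_map_mult unit_mult_eq_0_iff)
  then have "card ({u::'a. u dvd 1} \<times> {w \<in> monic_vecs k. dot k l w \<noteq> 0})
      = card {v. length v = k \<and> (\<exists>x\<in>set v. \<not> gam dvd x) \<and> dot k l v \<noteq> 0}"
    by (rule bij_betw_same_card)
  also have "{v. length v = k \<and> (\<exists>x\<in>set v. \<not> gam dvd x) \<and> dot k l v \<noteq> 0} = ?N 0 - ?N 1"
    unfolding gam_pow_vecs_def by auto
  finally have units_times_monic:
    "card {u::'a. u dvd 1} * card {w \<in> monic_vecs k. dot k l w \<noteq> 0} = card (?N 0 - ?N 1)"
    by (simp add: card_cartesian_product)
  have "?N 1 \<subseteq> ?N 0"
    unfolding gam_pow_vecs_def by auto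
  then have "real (card (?N 0 - ?N 1)) = real (card (?N 0)) - real (card (?N 1))"
    by (simp add: finite_gam_pow_vecs card_Diff_subset card_mono of_nat_diff)
  also have "\<dots> = (real (length T) ^ (s * k) - real (length T) ^ (s * (k - 1) + t))
      - (real (length T) ^ ((s - 1) * k) - real (length T) ^ ((s - 1) * (k - 1) + t))"
    using card_dot_nonzero_gam_pow_vecs[OF assms(1-4), of 0]
      card_dot_nonzero_gam_pow_vecs[OF assms(1-4), of 1] \<open>t < s\<close>
    by simp
  finally have "real (card {u::'a. u dvd 1}) * real (card {w \<in> monic_vecs k. dot k l w \<noteq> 0}) = \<dots>"
    unfolding units_times_monic[symmetric] of_nat_mult .
  moreover have "real (card {u::'a. u dvd 1}) = real (length T) ^ s - real (length T) ^ (s - 1)"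
    using two_le_length_T by (simp add: card_units of_nat_diff power_increasing)
  ultimately show ?thesis
    by (simp add: mult.commute)
qed

end

section \<open>Weight and valuation of a codeword\<close>

lemma L_beta_difference:
  fixes W :: real
  assumes "2 \<le> q" and "1 \<le> s" and "2 \<le> k"
    and W: "W * (real q ^ s - real q ^ (s - 1))
      = (real q ^ (s * k) - real q ^ (s * (k - 1) + t))
        - (real q ^ ((s - 1) * k) - real q ^ ((s - 1) * (k - 1) + t))"
  shows "W = L_beta q s k - real q ^ t * L_beta q s (k - 1)"
proof -
  obtain a where s: "s = Suc a"
    using assms(2) by (auto dest: Suc_le_D)
  obtain m where k: "k = Suc (Suc m)"
    using assms(3) by (metis add_2_eq_Suc le_Suc_ex)
  define Q where "Q = real q"
  have "Q - 1 > 0"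
    using assms(1) by (simp add: Q_def)
  have exps: "s * k = a + a + a * m + Suc m + 1" "s * (k - 1) + t = a + a * m + Suc m + t"
    "(s - 1) * k = a + a + a * m" "(s - 1) * (k - 1) + t = a + a * m + t"
    "(s - 1) * (k - 1) = a + a * m" "(s - 1) * (k - 1 - 1) = a * m"
    by (simp_all add: s k)
  have pow: "Q ^ (s * k) = Q ^ a * Q ^ a * Q ^ (a * m) * Q ^ Suc m * Q"
    "Q ^ (s * (k - 1) + t) = Q ^ a * Q ^ (a * m) * Q ^ Suc m * Q ^ t"
    "Q ^ ((s - 1) * k) = Q ^ a * Q ^ a * Q ^ (a * m)"
    "Q ^ ((s - 1) * (k - 1) + t) = Q ^ a * Q ^ (a * m) * Q ^ t"
    "Q ^ ((s - 1) * (k - 1)) = Q ^ a * Q ^ (a * m)"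
    "Q ^ ((s - 1) * (k - 1 - 1)) = Q ^ (a * m)"
    by (simp_all only: exps power_add power_one_right)
  have pow': "Q ^ s = Q ^ a * Q" "Q ^ (s - 1) = Q ^ a" "Q ^ k = Q ^ Suc m * Q" "Q ^ (k - 1) = Q ^ Suc m"
    by (simp_all add: s k mult.commute)
  have L: "L_beta q s k * (Q - 1) = Q ^ a * Q ^ (a * m) * (Q ^ Suc m * Q - 1)"
    "L_beta q s (k - 1) * (Q - 1) = Q ^ (a * m) * (Q ^ Suc m - 1)"
    using \<open>Q - 1 > 0\<close> unfolding L_beta_def Q_def[symmetric] pow pow' by simp_all
  have "W * (Q ^ a * (Q - 1))
      = Q ^ a * (L_beta q s k * (Q - 1)) - Q ^ a * Q ^ t * (L_beta q s (k - 1) * (Q - 1))"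
    using W unfolding L Q_def[symmetric] pow pow' by (simp add: algebra_simps)
  then have "W * (Q ^ a * (Q - 1)) = (L_beta q s k - Q ^ t * L_beta q s (k - 1)) * (Q ^ a * (Q - 1))"
    by (simp add: algebra_simps)
  moreover have "Q ^ a * (Q - 1) \<noteq> 0"
    using \<open>Q - 1 > 0\<close> by simp
  ultimately show ?thesis
    using assms(1) by (simp add: Q_def)
qed

context chain_ring
begin

lemma w_H_map_dot_G_beta:
  assumes "2 \<le> k" and "\<forall>i<k. gam ^ t dvd l i" and "p < k" "l p = gam ^ t * u" and "u dvd 1"
    and "t < s"
  shows "real (w_H (map (dot k l) (G_beta gam s T k)))
    = L_beta (length T) s k - real (length T) ^ t * L_beta (length T) s (k - 1)"
proof (rule L_beta_difference[OF two_le_length_T s_pos \<open>2 \<le> k\<close>])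
  obtain n where "k = Suc n"
    using assms(1) by (cases k) auto
  then have "w_H (map (dot k l) (G_beta gam s T k)) = card {w \<in> monic_vecs k. dot k l w \<noteq> 0}"
    using G_beta_columns[of n] w_H_map_distinct[of "G_beta gam s T k" "dot k l"] by simp
  then show "real (w_H (map (dot k l) (G_beta gam s T k))) * (real (length T) ^ s - real (length T) ^ (s - 1))
    = (real (length T) ^ (s * k) - real (length T) ^ (s * (k - 1) + t))
      - (real (length T) ^ ((s - 1) * k) - real (length T) ^ ((s - 1) * (k - 1) + t))"
    using card_monic_vecs_dot_nonzero[OF assms(2-6)] by simp
qed

lemma nu_vec_map_dot_G_beta:
  assumes "\<forall>i<k. gam ^ t dvd l i" and "p < k" "l p = gam ^ t * u" and "u dvd 1" and "t < s"
  shows "nu_vec gam (map (dot k l) (G_beta gam s T k)) = enat t"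
proof (rule nu_vec_eqI)
  obtain n where k: "k = Suc n"
    using assms(2) by (cases k) auto
  then have columns: "set (G_beta gam s T k) = monic_vecs k"
    using G_beta_columns[of n] by simp
  show "\<forall>y\<in>set (map (dot k l) (G_beta gam s T k)). gam ^ t dvd y"
    using assms(1) by (auto simp: dot_def intro: dvd_sum)
  have "dot k l (replicate p 0 @ 1 # replicate (k - Suc p) 0) = l p"
    using assms(2) by (simp add: dot_unit_vector)
  then show "l p \<in> set (map (dot k l) (G_beta gam s T k))"
    unfolding set_map columns using unit_vector_in_monic_vecs[OF assms(2)] by (metis image_eqI)
  show "nu gam (l p) = enat t"
    using assms(3-5) by (simp add: nu_gam_pow_mult_unit)
qed

end

theorem corollary3p21:
  fixes gam :: "'a::{comm_ring_1,finite}" and s k :: nat and T :: "'a list" and c :: "'a list"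
  assumes "chain_ring_data gam s T"
    and "2 \<le> k"
    and "c \<in> S_beta gam s T k"
    and "c \<noteq> replicate (length c) 0"
  shows "real (w_H c) = L_beta (length T) s k
           - real (length T) ^ the_enat (nu_vec gam c) * L_beta (length T) s (k - 1)"
proof -
  interpret chain_ring gam s T
    by (rule chain_ring.intro) (rule assms(1))
  obtain l where c: "c = map (dot k l) (G_beta gam s T k)"
    using assms(3) unfolding S_beta_def row_span_def dot_def by blast
  have "\<exists>i<k. l i \<noteq> 0"
  proof (rule ccontr)
    assume "\<not> (\<exists>i<k. l i \<noteq> 0)"
    then have "dot k l = (\<lambda>_. 0)"
      by (simp add: dot_def fun_eq_iff)
    then have "c = replicate (length c) 0"
      unfolding c by (simp add: map_replicate_const)
    with assms(4) show False ..
  qed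
  then obtain i where "l i \<in> l ` {..<k}" "l i \<noteq> 0"
    by blast
  then obtain t where "t < s" and "\<forall>x\<in>l ` {..<k}. gam ^ t dvd x"
    and "\<exists>x\<in>l ` {..<k}. \<exists>u. u dvd 1 \<and> x = gam ^ t * u"
    by (rule min_valuation_exists)
  moreover from this obtain p u where "p < k" "l p = gam ^ t * u" "u dvd 1"
    by blast
  ultimately have "nu_vec gam c = enat t" "real (w_H c) = L_beta (length T) s k
    - real (length T) ^ t * L_beta (length T) s (k - 1)"
    unfolding c using assms(2) nu_vec_map_dot_G_beta w_H_map_dot_G_beta by simp_all
  then show ?thesis
    by simp
qed

end
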